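(* Let $X$ be an idempotent Frobenius semiring and $n\ge1$. Then for every $j$ with $1\le j\le n$ and all $d_1\ge d_2\ge\dots\ge d_j$ in $\mathbb{N}$, $$\mathrm{Sym}_n(x_1^{d_1}\cdots x_j^{d_j})=e_j^{d_j}\cdot\mathrm{Sym}_n\big(x_1^{d_1-d_j}\cdots x_{j-1}^{d_{j-1}-d_j}\big)$$ as functions $X^n\to X$.
   Context: A semiring $(X,+,0,\cdot)$: $(X,+,0)$ commutative monoid, $(X,\cdot)$ semigroup, distributivity, $0$ absorbing. Idempotent: $x+x=x$. A Frobenius semiring is a unital commutative semiring with $(x+y)^n=x^n+y^n$ for all $x,y$, $n\ge1$. For a polynomial $p:X^n\to X$, $\mathrm{Sym}_n(p)(x_1,\dots,x_n)=\sum_{\sigma\in S_n}p(x_{\sigma(1)},\dots,x_{\sigma(n)})$; monomials in $x_1,\dots,x_j$ are regarded as functions of all $n$ variables. $e_j(x_1,\dots,x_n)$ is the sum of all products of $j$ distinct variables among $x_1,\dots,x_n$. *)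

theory Defs
  imports "HOL-Combinatorics.Permutations"
begin

text \<open>Variables x_1..x_n are modelled by a function x :: nat => 'a, using indices 1..n.\<close>

definition idempotent_frobenius :: "'a::{comm_semiring_0, comm_monoid_mult} itself \<Rightarrow> bool" where
  "idempotent_frobenius _ \<longleftrightarrow>
     (\<forall>x::'a. x + x = x) \<and> (\<forall>(x::'a) y. \<forall>m::nat. m \<ge> 1 \<longrightarrow> (x + y) ^ m = x ^ m + y ^ m)"

definition Sym :: "nat \<Rightarrow> ((nat \<Rightarrow> 'a) \<Rightarrow> 'a) \<Rightarrow> (nat \<Rightarrow> 'a) \<Rightarrow> 'a::comm_monoid_add" where
  "Sym n p x = (\<Sum>\<sigma>\<in>{\<sigma>. \<sigma> permutes {1..n}}. p (x \<circ> \<sigma>))"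

definition elem_sym :: "nat \<Rightarrow> nat \<Rightarrow> (nat \<Rightarrow> 'a) \<Rightarrow> 'a::{comm_monoid_add, comm_monoid_mult}" where
  "elem_sym n j x = (\<Sum>S\<in>{S. S \<subseteq> {1..n} \<and> card S = j}. \<Prod>i\<in>S. x i)"

end

theory Submission
  imports Defs
begin

text \<open>In an idempotent semiring \<open>u + v = v\<close> is a partial order, so it suffices to bound every
  term of each side by the other side. Put \<open>e = d_j\<close> and \<open>c_i = d_i - d_j\<close>. By the Frobenius
  property \<open>e_j^e\<close> is the sum of \<open>x_S^e\<close> over the \<open>j\<close>-subsets \<open>S\<close>, so the right-hand side is
  the sum of the terms \<open>x_S^e \<cdot> \<sigma>(x_1^c_1 \<cdots> x_(j-1)^c_(j-1))\<close>, and the monomial of the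
  left-hand side belonging to \<open>\<pi>\<close> is the term for \<open>S = \<pi>{1..j}\<close>. Conversely, the term for
  \<open>(S, \<sigma>)\<close> is a monomial of the left-hand side when \<open>\<sigma>{1..j-1} \<subseteq> S\<close>. Otherwise pick
  \<open>a \<in> S - \<sigma>{1..j-1}\<close> and \<open>b = \<sigma> k \<notin> S\<close>: the term is \<open>R x_a^e x_b^c_k\<close>, and as
  \<open>x_a^e x_b^c_k\<close> occurs in \<open>(x_a + x_b)^(e+c_k) = x_a^(e+c_k) + x_b^(e+c_k)\<close> it lies below
  \<open>R x_a^(e+c_k) + R x_b^(e+c_k)\<close>, the sum of the terms for \<open>(S, (a b) \<circ> \<sigma>)\<close> and
  \<open>(S - {a} \<union> {b}, \<sigma>)\<close>, which both have fewer elements of \<open>\<sigma>{1..j-1}\<close> outside the set.\<close>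

lemma prod_power_distrib_comm_monoid:
  "(\<Prod>i\<in>A. f i :: 'a::comm_monoid_mult) ^ m = (\<Prod>i\<in>A. f i ^ m)"
  by (induction A rule: infinite_finite_induct) (auto simp: power_mult_distrib)

lemma add_absorb_trans: "(u::'a::semigroup_add) + v = v \<Longrightarrow> v + w = w \<Longrightarrow> u + w = w"
  by (metis add.assoc)

lemma sum_absorb:
  fixes f :: "'b \<Rightarrow> 'a::comm_monoid_add"
  shows "finite A \<Longrightarrow> (\<And>a. a \<in> A \<Longrightarrow> f a + L = L) \<Longrightarrow> sum f A + L = L"
  by (induction A rule: finite_induct) (auto simp: add.assoc)

lemma summand_absorb:
  fixes f :: "'b \<Rightarrow> 'a::comm_monoid_add"
  assumes idem: "\<And>u::'a. u + u = u" and "finite A" "a \<in> A"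
  shows "f a + sum f A = sum f A"
proof -
  have "sum f A = f a + sum f (A - {a})" using assms by (simp add: sum.remove)
  then show ?thesis by (metis add.assoc idem)
qed

lemma sum_const_idem:
  fixes c :: "'a::comm_monoid_add"
  assumes idem: "\<And>u::'a. u + u = u"
  shows "finite A \<Longrightarrow> A \<noteq> {} \<Longrightarrow> (\<Sum>a\<in>A. c) = c"
  by (induction A rule: finite_ne_induct) (simp_all add: idem)

lemma mixed_power_absorb:
  fixes a b :: "'a::{comm_semiring_0,comm_monoid_mult}"
  assumes idem: "\<And>u::'a. u + u = u"
  shows "p \<le> m \<Longrightarrow> a ^ p * b ^ (m - p) + (a + b) ^ m = (a + b) ^ m"
proof (induction m arbitrary: p)
  case 0
  then show ?case using idem by simp
next
  case (Suc m)
  let ?X = "(a + b) ^ m"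
  have expand: "(a + b) ^ Suc m = ?X * a + ?X * b" by (simp only: power_Suc2 distrib_left)
  show ?case
  proof (cases p)
    case 0
    have "b ^ m + ?X = ?X" using Suc.IH[of 0] by simp
    then have "b ^ m * b + ?X * b = ?X * b" by (metis distrib_right)
    then have "b ^ Suc m + (?X * a + ?X * b) = ?X * a + ?X * b"
      unfolding power_Suc2 by (metis add.left_commute)
    then show ?thesis using 0 expand by simp
  next
    case (Suc p')
    with Suc.prems have "a ^ p' * b ^ (m - p') + ?X = ?X" using Suc.IH by simp
    then have "a ^ p' * b ^ (m - p') * a + ?X * a = ?X * a" by (metis distrib_right)
    moreover have "a ^ p * b ^ (Suc m - p) = a ^ p' * b ^ (m - p') * a"
      using Suc by (simp add: power_Suc2 ac_simps)
    ultimately show ?thesis using expand by (metis add.assoc)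
  qed
qed

lemma idempotent_frobenius_add_idem:
  "idempotent_frobenius TYPE('a::{comm_semiring_0,comm_monoid_mult}) \<Longrightarrow> (u::'a) + u = u"
  unfolding idempotent_frobenius_def by blast

lemma idempotent_frobenius_power_add:
  "idempotent_frobenius TYPE('a::{comm_semiring_0,comm_monoid_mult}) \<Longrightarrow> m \<ge> 1 \<Longrightarrow>
    ((u::'a) + v) ^ m = u ^ m + v ^ m"
  unfolding idempotent_frobenius_def by blast

lemma frobenius_mixed_power_absorb:
  fixes a b :: "'a::{comm_semiring_0,comm_monoid_mult}"
  assumes "idempotent_frobenius TYPE('a)"
  shows "a ^ p * b ^ q + (a ^ (p + q) + b ^ (p + q)) = a ^ (p + q) + b ^ (p + q)"
proof (cases "p + q = 0")
  case True
  then show ?thesis using idempotent_frobenius_add_idem[OF assms] by simp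
next
  case False
  have "a ^ p * b ^ (p + q - p) + (a + b) ^ (p + q) = (a + b) ^ (p + q)"
    by (rule mixed_power_absorb[OF idempotent_frobenius_add_idem[OF assms]]) simp
  then show ?thesis using idempotent_frobenius_power_add[OF assms, of "p + q" a b] False by simp
qed

text \<open>For \<open>m = 0\<close> the right-hand side is a nonempty sum of ones, which is \<open>1\<close> by idempotence.\<close>

lemma frobenius_power_sum:
  fixes f :: "'b \<Rightarrow> 'a::{comm_semiring_0,comm_monoid_mult}"
  assumes "idempotent_frobenius TYPE('a)" "finite A" "A \<noteq> {}"
  shows "(sum f A) ^ m = (\<Sum>a\<in>A. f a ^ m)"
proof (cases "m = 0")
  case True
  then show ?thesis using sum_const_idem[OF idempotent_frobenius_add_idem[OF assms(1)] assms(2,3)] by simp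
next
  case False
  then obtain k where m: "m = Suc k" using not0_implies_Suc by blast
  show ?thesis using assms(2)
  proof (induction A rule: finite_induct)
    case empty
    then show ?case by (simp add: m)
  next
    case (insert a A)
    then show ?case by (simp add: idempotent_frobenius_power_add[OF assms(1)] m del: power_Suc)
  qed
qed

lemma antitone_le_last:
  fixes d :: "nat \<Rightarrow> 'a::preorder"
  assumes "\<forall>i. 1 \<le> i \<and> i < j \<longrightarrow> d (i + 1) \<le> d i" "i \<in> {1..j}"
  shows "d j \<le> d i"
proof -
  have "i \<le> j" using assms(2) by simp
  then show ?thesis
    by (induction j rule: dec_induct) (use assms in \<open>auto intro: order.trans\<close>)
qed

lemma transpose_comp_apply_other:
  assumes "inj \<sigma>" "a \<notin> \<sigma> ` I" "i \<in> I" "i \<noteq> k"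
  shows "(transpose a (\<sigma> k) \<circ> \<sigma>) i = \<sigma> i"
proof -
  have "\<sigma> i \<noteq> a" "\<sigma> i \<noteq> \<sigma> k" using assms by (auto dest: injD)
  then show ?thesis by (simp add: transpose_apply_other)
qed

lemma transpose_comp_image:
  assumes "inj \<sigma>" "a \<notin> \<sigma> ` I" "k \<in> I"
  shows "(transpose a (\<sigma> k) \<circ> \<sigma>) ` I = insert a (\<sigma> ` I - {\<sigma> k})"
proof -
  have "(transpose a (\<sigma> k) \<circ> \<sigma>) ` (I - {k}) = \<sigma> ` (I - {k})"
    using transpose_comp_apply_other[OF assms(1,2)] by (intro image_cong) auto
  also have "\<dots> = \<sigma> ` I - {\<sigma> k}" using assms(1,3) by (auto dest: injD)
  moreover have "(transpose a (\<sigma> k) \<circ> \<sigma>) ` I = insert a ((transpose a (\<sigma> k) \<circ> \<sigma>) ` (I - {k}))"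
    using assms(3) by (force simp: image_iff)
  ultimately show ?thesis by simp
qed

context
  fixes x :: "nat \<Rightarrow> 'a::{comm_semiring_0,comm_monoid_mult}" and n j :: nat and d :: "nat \<Rightarrow> nat"
  assumes frobenius: "idempotent_frobenius TYPE('a)"
    and j: "1 \<le> j" "j \<le> n"
    and d_ge_last: "\<And>i. i \<in> {1..j} \<Longrightarrow> d j \<le> d i"
begin

definition split_monomial :: "nat set \<Rightarrow> (nat \<Rightarrow> nat) \<Rightarrow> 'a" where
  "split_monomial S \<sigma> = (\<Prod>i\<in>S. x i ^ d j) * (\<Prod>i=1..j-1. x (\<sigma> i) ^ (d i - d j))"

lemma prod_power_split:
  assumes "I \<subseteq> {1..j}" "inj_on \<sigma> I"
  shows "(\<Prod>i\<in>I. x (\<sigma> i) ^ d i) = (\<Prod>i\<in>\<sigma> ` I. x i ^ d j) * (\<Prod>i\<in>I. x (\<sigma> i) ^ (d i - d j))"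
proof -
  have "(\<Prod>i\<in>I. x (\<sigma> i) ^ d i) = (\<Prod>i\<in>I. x (\<sigma> i) ^ d j * x (\<sigma> i) ^ (d i - d j))"
    using assms(1) d_ge_last by (intro prod.cong) (auto simp flip: power_add)
  also have "\<dots> = (\<Prod>i\<in>I. x (\<sigma> i) ^ d j) * (\<Prod>i\<in>I. x (\<sigma> i) ^ (d i - d j))"
    by (rule prod.distrib)
  finally show ?thesis using prod.reindex[OF assms(2), of "\<lambda>i. x i ^ d j"] by simp
qed

lemma split_monomial_of_perm:
  assumes "\<pi> permutes {1..n}"
  shows "(\<Prod>i=1..j. x (\<pi> i) ^ d i) = split_monomial (\<pi> ` {1..j}) \<pi>"
proof -
  have "{1..j} = insert j {1..j-1}" using j by auto
  then have "(\<Prod>i=1..j. x (\<pi> i) ^ (d i - d j)) = (\<Prod>i=1..j-1. x (\<pi> i) ^ (d i - d j))"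
    using j by simp
  then show ?thesis
    using prod_power_split[OF order.refl permutes_inj_on[OF assms]] by (simp add: split_monomial_def)
qed

lemma perm_of_split_monomial:
  assumes \<sigma>: "\<sigma> permutes {1..n}" and S: "S \<subseteq> {1..n}" "card S = j" and sub: "\<sigma> ` {1..j-1} \<subseteq> S"
  obtains \<pi> where "\<pi> permutes {1..n}" "split_monomial S \<sigma> = (\<Prod>i=1..j. x (\<pi> i) ^ d i)"
proof -
  have inj: "inj \<sigma>" using \<sigma> by (rule permutes_inj)
  have "card (S - \<sigma> ` {1..j-1}) = 1"
    using sub S j card_image[OF inj_on_subset[OF inj]] by (simp add: card_Diff_subset)
  then obtain a where a: "S - \<sigma> ` {1..j-1} = {a}" by (rule card_1_singletonE)
  define \<pi> where "\<pi> = transpose a (\<sigma> j) \<circ> \<sigma>"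
  have "a \<in> {1..n}" "\<sigma> j \<in> {1..n}" using a S permutes_in_image[OF \<sigma>] j by auto
  then have "\<pi> permutes {1..n}" unfolding \<pi>_def by (intro permutes_compose[OF \<sigma> permutes_swap_id])
  moreover have "split_monomial S \<sigma> = (\<Prod>i=1..j. x (\<pi> i) ^ d i)"
  proof -
    have S_eq: "S = insert a (\<sigma> ` {1..j-1})" "a \<notin> \<sigma> ` {1..j-1}" using a sub by auto
    have \<pi>_eq: "\<pi> i = \<sigma> i" if "i \<in> {1..j-1}" for i
      unfolding \<pi>_def using S_eq(2) that j by (intro transpose_comp_apply_other[OF inj]) auto
    have "{1..j} = insert j {1..j-1}" using j by auto
    then have "(\<Prod>i=1..j. x (\<pi> i) ^ d i) = x (\<pi> j) ^ d j * (\<Prod>i=1..j-1. x (\<pi> i) ^ d i)"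
      using j by simp
    also have "\<dots> = x a ^ d j * (\<Prod>i=1..j-1. x (\<sigma> i) ^ d i)"
      using \<pi>_eq by (simp add: \<pi>_def)
    also have "\<dots> = split_monomial S \<sigma>"
      using prod_power_split[of "{1..j-1}" \<sigma>] inj S_eq by (simp add: split_monomial_def inj_on_subset mult.assoc)
    finally show ?thesis by simp
  qed
  ultimately show thesis by (rule that)
qed

lemma split_monomial_exchange:
  assumes inj: "inj \<sigma>" and S: "finite S" "a \<in> S" "\<sigma> k \<notin> S"
    and a: "a \<notin> \<sigma> ` {1..j-1}" and k: "k \<in> {1..j-1}"
  shows "split_monomial S \<sigma> + (split_monomial S (transpose a (\<sigma> k) \<circ> \<sigma>)
           + split_monomial (insert (\<sigma> k) (S - {a})) \<sigma>)
       = split_monomial S (transpose a (\<sigma> k) \<circ> \<sigma>) + split_monomial (insert (\<sigma> k) (S - {a})) \<sigma>"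
proof -
  define b where "b = \<sigma> k"
  define e where "e = d j"
  define c where "c = d k - d j"
  define R where "R = (\<Prod>i\<in>S - {a}. x i ^ e) * (\<Prod>i\<in>{1..j-1} - {k}. x (\<sigma> i) ^ (d i - d j))"
  have prod_remove_k: "(\<Prod>i=1..j-1. x (\<rho> i) ^ (d i - d j))
      = x (\<rho> k) ^ c * (\<Prod>i\<in>{1..j-1} - {k}. x (\<rho> i) ^ (d i - d j))" for \<rho>
    unfolding c_def using k by (simp add: prod.remove)
  have \<tau>_eq: "(transpose a b \<circ> \<sigma>) i = \<sigma> i" if "i \<in> {1..j-1} - {k}" for i
    unfolding b_def using that by (intro transpose_comp_apply_other[OF inj a]) auto
  have "split_monomial S \<sigma> = R * (x a ^ e * x b ^ c)"
    unfolding split_monomial_def prod_remove_k using S by (simp add: R_def prod.remove e_def b_def ac_simps)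
  moreover have "split_monomial S (transpose a b \<circ> \<sigma>) = R * x a ^ (e + c)"
  proof -
    have "(\<Prod>i\<in>{1..j-1} - {k}. x ((transpose a b \<circ> \<sigma>) i) ^ (d i - d j))
        = (\<Prod>i\<in>{1..j-1} - {k}. x (\<sigma> i) ^ (d i - d j))"
      using \<tau>_eq by (intro prod.cong) auto
    then show ?thesis
      unfolding split_monomial_def prod_remove_k using S
      by (simp add: R_def prod.remove e_def b_def power_add ac_simps)
  qed
  moreover have "split_monomial (insert b (S - {a})) \<sigma> = R * x b ^ (e + c)"
    unfolding split_monomial_def prod_remove_k using S by (simp add: R_def e_def b_def power_add ac_simps)
  moreover have "x a ^ e * x b ^ c + (x a ^ (e + c) + x b ^ (e + c)) = x a ^ (e + c) + x b ^ (e + c)"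
    by (rule frobenius_mixed_power_absorb[OF frobenius])
  ultimately show ?thesis unfolding b_def by (metis distrib_left)
qed

lemma split_monomial_absorb:
  assumes "\<sigma> permutes {1..n}" "S \<subseteq> {1..n}" "card S = j"
  shows "split_monomial S \<sigma> + Sym n (\<lambda>y. \<Prod>i=1..j. y i ^ d i) x = Sym n (\<lambda>y. \<Prod>i=1..j. y i ^ d i) x"
  using assms
proof (induction "card (\<sigma> ` {1..j-1} - S)" arbitrary: S \<sigma>)
  case 0
  then have "\<sigma> ` {1..j-1} \<subseteq> S" by simp
  with "0.prems" obtain \<pi> where "\<pi> permutes {1..n}" "split_monomial S \<sigma> = (\<Prod>i=1..j. x (\<pi> i) ^ d i)"
    by (rule perm_of_split_monomial)
  then show ?case
    unfolding Sym_def using summand_absorb[OF idempotent_frobenius_add_idem[OF frobenius],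
        of "{\<pi>. \<pi> permutes {1..n}}" \<pi> "\<lambda>\<pi>. \<Prod>i=1..j. x (\<pi> i) ^ d i"]
    by (simp add: finite_permutations)
next
  case (Suc m)
  note \<sigma> = Suc.prems(1) and S = Suc.prems(2,3)
  let ?L = "Sym n (\<lambda>y. \<Prod>i=1..j. y i ^ d i) x"
  have inj: "inj \<sigma>" using \<sigma> by (rule permutes_inj)
  have fin_S: "finite S" using S(1) finite_subset by blast
  have "\<sigma> ` {1..j-1} - S \<noteq> {}" using Suc.hyps(2) by (metis card.empty nat.distinct(1))
  then obtain b where b: "b \<in> \<sigma> ` {1..j-1} - S" by blast
  then obtain k where k: "k \<in> {1..j-1}" "b = \<sigma> k" by blast
  have "card (\<sigma> ` {1..j-1}) < card S" using S j card_image[OF inj_on_subset[OF inj]] by simp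
  then have "\<not> S \<subseteq> \<sigma> ` {1..j-1}" by (meson card_mono finite_imageI finite_atLeastAtMost not_le)
  then obtain a where a: "a \<in> S" "a \<notin> \<sigma> ` {1..j-1}" by blast
  define \<tau> where "\<tau> = transpose a b \<circ> \<sigma>"
  define S' where "S' = insert b (S - {a})"
  have "a \<in> {1..n}" "b \<in> {1..n}" using a S b permutes_in_image[OF \<sigma>] j k by auto
  then have \<tau>: "\<tau> permutes {1..n}" unfolding \<tau>_def by (intro permutes_compose[OF \<sigma> permutes_swap_id])
  have S': "S' \<subseteq> {1..n}" "card S' = j"
    unfolding S'_def using S b \<open>b \<in> {1..n}\<close> a fin_S by (auto simp: card.insert_remove)
  have "\<sigma> ` {1..j-1} - S' = (\<sigma> ` {1..j-1} - S) - {b}" unfolding S'_def using a by auto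
  then have m_S': "m = card (\<sigma> ` {1..j-1} - S')" using Suc.hyps(2) b by simp
  have "\<tau> ` {1..j-1} - S = (\<sigma> ` {1..j-1} - S) - {b}"
    unfolding \<tau>_def k(2) using transpose_comp_image[OF inj a(2) k(1)] a(1) by auto
  then have m_\<tau>: "m = card (\<tau> ` {1..j-1} - S)" using Suc.hyps(2) b by simp
  have "split_monomial S \<sigma> + (split_monomial S \<tau> + split_monomial S' \<sigma>)
      = split_monomial S \<tau> + split_monomial S' \<sigma>"
    unfolding \<tau>_def S'_def k(2) using split_monomial_exchange[OF inj fin_S a(1) _ a(2) k(1)] b k by simp
  moreover have "(split_monomial S \<tau> + split_monomial S' \<sigma>) + ?L = ?L"
    using Suc.hyps(1)[OF m_\<tau> \<tau> S] Suc.hyps(1)[OF m_S' \<sigma> S'] by (simp add: add.assoc)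
  ultimately show ?case by (rule add_absorb_trans)
qed

lemma Sym_eq_sum_split_monomial:
  "Sym n (\<lambda>y. \<Prod>i=1..j. y i ^ d i) x
    = (\<Sum>(S, \<sigma>) \<in> {S. S \<subseteq> {1..n} \<and> card S = j} \<times> {\<sigma>. \<sigma> permutes {1..n}}. split_monomial S \<sigma>)"
  (is "?L = (\<Sum>(S, \<sigma>) \<in> ?SS \<times> ?P. _)")
proof -
  let ?R = "\<Sum>(S, \<sigma>) \<in> ?SS \<times> ?P. split_monomial S \<sigma>"
  have fin_P: "finite ?P" by (simp add: finite_permutations)
  have fin: "finite (?SS \<times> ?P)" using fin_P by (intro finite_cartesian_product) (auto intro: finite_subset)
  have "split_monomial S \<sigma> + ?L = ?L" if "(S, \<sigma>) \<in> ?SS \<times> ?P" for S \<sigma>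
    using that split_monomial_absorb by blast
  then have R_absorbed: "?R + ?L = ?L"
    using fin by (intro sum_absorb) auto
  have L_absorbed: "?L + ?R = ?R"
    unfolding Sym_def comp_def using fin_P
  proof (rule sum_absorb)
    fix \<pi> assume "\<pi> \<in> ?P"
    then have \<pi>: "\<pi> permutes {1..n}" by simp
    have "\<pi> ` {1..j} \<subseteq> \<pi> ` {1..n}" using j by (intro image_mono) auto
    then have "(\<pi> ` {1..j}, \<pi>) \<in> ?SS \<times> ?P"
      using \<pi> permutes_image[OF \<pi>] card_image[OF permutes_inj_on[OF \<pi>]] by auto
    from summand_absorb[OF idempotent_frobenius_add_idem[OF frobenius] fin this,
        of "\<lambda>(S, \<sigma>). split_monomial S \<sigma>"]
    show "(\<Prod>i=1..j. x (\<pi> i) ^ d i) + ?R = ?R"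
      by (simp only: split_monomial_of_perm[OF \<pi>] prod.case)
  qed
  have "?L = ?R + ?L" using R_absorbed by simp
  also have "\<dots> = ?L + ?R" by (rule add.commute)
  also have "\<dots> = ?R" by (rule L_absorbed)
  finally show ?thesis .
qed

lemma elem_sym_power_mult_Sym:
  "elem_sym n j x ^ d j * Sym n (\<lambda>y. \<Prod>i=1..j-1. y i ^ (d i - d j)) x
    = (\<Sum>(S, \<sigma>) \<in> {S. S \<subseteq> {1..n} \<and> card S = j} \<times> {\<sigma>. \<sigma> permutes {1..n}}. split_monomial S \<sigma>)"
proof -
  let ?SS = "{S. S \<subseteq> {1..n} \<and> card S = j}"
  have "finite ?SS" by (rule finite_subset[of _ "Pow {1..n}"]) auto
  moreover have "?SS \<noteq> {}" using j by (auto intro!: exI[of _ "{1..j}"])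
  ultimately have "elem_sym n j x ^ d j = (\<Sum>S\<in>?SS. (\<Prod>i\<in>S. x i) ^ d j)"
    unfolding elem_sym_def by (rule frobenius_power_sum[OF frobenius])
  then have "elem_sym n j x ^ d j = (\<Sum>S\<in>?SS. \<Prod>i\<in>S. x i ^ d j)"
    by (simp add: prod_power_distrib_comm_monoid)
  then show ?thesis
    by (simp add: Sym_def split_monomial_def sum_product sum.cartesian_product case_prod_beta)
qed

end

theorem lemma4p4:
  fixes n j :: nat and d :: "nat \<Rightarrow> nat"
  assumes "idempotent_frobenius TYPE('a::{comm_semiring_0, comm_monoid_mult})"
    and "n \<ge> 1" and "1 \<le> j" and "j \<le> n"
    and "\<forall>i. 1 \<le> i \<and> i < j \<longrightarrow> d (i + 1) \<le> d i"
  shows "Sym n (\<lambda>y::nat \<Rightarrow> 'a. \<Prod>i=1..j. y i ^ d i)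
       = (\<lambda>x. elem_sym n j x ^ d j * Sym n (\<lambda>y. \<Prod>i=1..j-1. y i ^ (d i - d j)) x)"
proof
  fix x :: "nat \<Rightarrow> 'a"
  have d_ge_last: "\<And>i. i \<in> {1..j} \<Longrightarrow> d j \<le> d i"
    using antitone_le_last[OF assms(5)] .
  show "Sym n (\<lambda>y. \<Prod>i=1..j. y i ^ d i) x
      = elem_sym n j x ^ d j * Sym n (\<lambda>y. \<Prod>i=1..j-1. y i ^ (d i - d j)) x"
    using Sym_eq_sum_split_monomial[where d = d, OF assms(1,3,4) d_ge_last]
      elem_sym_power_mult_Sym[where d = d, OF assms(1,3,4) d_ge_last] by simp
qed

end
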